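(* Assume $2\hat P-P+A_2^TA_2$ is symmetric positive definite. Then the eigenpairs of $\mathcal{M}_4^{-1}\mathcal{A}$ have the following structure: (i) $\mu=1$ is an eigenvalue with geometric multiplicity $p+q+d$, where $d=\dim\big(\mathcal{N}(\hat P-P)\cap\mathcal{N}(A_2)\big)$; a basis of the eigenspace consists of the $p+q$ vectors $(x_i;0;0)$, $(0;0;z_j)$, with $\{x_i\}_{i=1}^p$, $\{z_j\}_{j=1}^q$ bases of $\mathbb{R}^p$, $\mathbb{R}^q$, together with the $d$ vectors $(0;y_k;0)$, where $\{y_k\}_{k=1}^d$ is a basis of $\mathcal{N}(\hat P-P)\cap\mathcal{N}(A_2)$. (ii) If $\mu\ne1$ is an eigenvalue, every corresponding eigenvector has the form $\left(-A_1y;\,y;\,\frac{1}{\mu-1}A_2y\right)$ where $y\neq0$ satisfies $\hat P^{-1}(P-A_2^TA_2)y=\mu y$ (and conversely); the geometric multiplicity $h_\mu$ of $\mu$ is the number of linearly independent such $y$, and if $h$ is the total number of linearly independent eigenvectors for non-unit eigenvalues, then $0\le h_\mu\le h\le n$ and $\mathcal{M}_4^{-1}\mathcal{A}$ has $p+q+d+h$ linearly independent eigenvectors. (iii) All eigenvalues of $\mathcal{M}_4^{-1}\mathcal{A}$ are real and lie in the interval $(0,2)$.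
   Context: Let $A_1\in\mathbb{R}^{p\times n}$ have full column rank and $A_2\in\mathbb{R}^{q\times n}$. Set $P=A_1^TA_1$ and assume $P-A_2^TA_2$ is symmetric positive definite. Let $\hat P\in\mathbb{R}^{n\times n}$ be symmetric positive definite. Define $\mathcal{A}=\begin{pmatrix}I_p&A_1&0\\0&P&A_2^T\\0&A_2&I_q\end{pmatrix}$ and $\mathcal{M}_4=\begin{pmatrix}I_p&A_1&0\\0&\hat P&A_2^T\\0&0&I_q\end{pmatrix}$. Vectors are written $(x;y;z)$ with $x\in\mathbb{C}^p,y\in\mathbb{C}^n,z\in\mathbb{C}^q$. $\mathcal{N}(\cdot)$ denotes null space. *)

theory Defs
  imports "Jordan_Normal_Form.Matrix_Kernel" "Jordan_Normal_Form.Char_Poly"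
    "Jordan_Normal_Form.Gauss_Jordan_Elimination" "Jordan_Normal_Form.DL_Rank"
begin

definition spd :: "real mat \<Rightarrow> nat \<Rightarrow> bool" where
  "spd M n \<longleftrightarrow> M \<in> carrier_mat n n \<and> transpose_mat M = M \<and>
     (\<forall>x \<in> carrier_vec n. x \<noteq> 0\<^sub>v n \<longrightarrow> x \<bullet> (M *\<^sub>v x) > 0)"

definition cmat :: "real mat \<Rightarrow> complex mat" where
  "cmat M = map_mat complex_of_real M"

definition hcat :: "'a :: zero mat \<Rightarrow> 'a mat \<Rightarrow> 'a mat" where
  "hcat A B = four_block_mat A B (0\<^sub>m 0 (dim_col A)) (0\<^sub>m 0 (dim_col B))"

definition Pmat :: "real mat \<Rightarrow> real mat" where
  "Pmat A1 = transpose_mat A1 * A1"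

(* the block matrix  [I_p A1 0; 0 P A2^T; 0 A2 I_q] *)
definition Acal :: "nat \<Rightarrow> nat \<Rightarrow> nat \<Rightarrow> real mat \<Rightarrow> real mat \<Rightarrow> real mat" where
  "Acal p n q A1 A2 = four_block_mat (1\<^sub>m p) (hcat A1 (0\<^sub>m p q)) (0\<^sub>m (n + q) p)
      (four_block_mat (Pmat A1) (transpose_mat A2) A2 (1\<^sub>m q))"

(* the block preconditioner  [I_p A1 0; 0 Phat A2^T; 0 0 I_q] *)
definition M4cal :: "nat \<Rightarrow> nat \<Rightarrow> nat \<Rightarrow> real mat \<Rightarrow> real mat \<Rightarrow> real mat \<Rightarrow> real mat" where
  "M4cal p n q A1 A2 Ph = four_block_mat (1\<^sub>m p) (hcat A1 (0\<^sub>m p q)) (0\<^sub>m (n + q) p)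
      (four_block_mat Ph (transpose_mat A2) (0\<^sub>m q n) (1\<^sub>m q))"

definition clin_indpt :: "nat \<Rightarrow> complex vec set \<Rightarrow> bool" where
  "clin_indpt N S = (\<not> module.lin_dep class_ring (module_vec TYPE(complex) N) S)"

definition cbasis :: "nat \<Rightarrow> complex vec set \<Rightarrow> complex vec set \<Rightarrow> bool" where
  "cbasis N W S = vectorspace.basis class_ring ((module_vec TYPE(complex) N)\<lparr>carrier := W\<rparr>) S"

definition cdim :: "nat \<Rightarrow> complex vec set \<Rightarrow> nat" where
  "cdim N W = vectorspace.dim class_ring ((module_vec TYPE(complex) N)\<lparr>carrier := W\<rparr>)"

end

theory Submission
  imports Defs
begin

(* Write v = (x; y; z). The eigenproblem for M4^-1 A is the pencil A v = mu M4 v, whose block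
   rows are
     x + A1 y = mu (x + A1 y),   P y + A2^T z = mu (Ph y + A2^T z),   A2 y + z = mu z.
   For mu = 1 the outer rows hold trivially and the middle row says y in N(Ph - P) and A2 y = 0,
   which gives (i). For mu ~= 1 the outer rows force x = -A1 y and z = A2 y / (mu - 1), and then the
   middle row becomes (P - A2^T A2) y = mu Ph y. Hence y |-> (-A1 y; y; A2 y / (mu - 1)) is a linear
   bijection from the mu-eigenspace of Ph^-1 (P - A2^T A2) onto that of M4^-1 A, which gives (ii);
   eigenvectors for distinct eigenvalues are independent, so the multiplicities add up and h <= n.
   For (iii), mu = y^* (P - A2^T A2) y / y^* Ph y is a quotient of positive reals, and so is
   2 - mu = y^* (2 Ph - P + A2^T A2) y / y^* Ph y. *)

section \<open>Hermitian forms of real matrices\<close>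

definition hermitian_form :: "real mat \<Rightarrow> complex vec \<Rightarrow> complex" where
  "hermitian_form M y = (\<Sum>i<dim_vec y. \<Sum>j<dim_vec y. cnj (y$i) * of_real (M$$(i,j)) * y$j)"

lemma scalar_prod_mult_mat_vec_double_sum:
  fixes M :: "'a :: comm_semiring_0 mat"
  assumes M: "M \<in> carrier_mat n n" and a: "a \<in> carrier_vec n"
  shows "a \<bullet> (M *\<^sub>v a) = (\<Sum>i<n. \<Sum>j<n. M$$(i,j) * (a$i * a$j))"
proof -
  have "a \<bullet> (M *\<^sub>v a) = (\<Sum>i<n. a$i * (\<Sum>j<n. M$$(i,j) * a$j))"
    using M a by (auto simp: scalar_prod_def lessThan_atLeast0 intro!: sum.cong)
  also have "\<dots> = (\<Sum>i<n. \<Sum>j<n. M$$(i,j) * (a$i * a$j))"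
    unfolding sum_distrib_left by (intro sum.cong refl) (simp add: mult_ac)
  finally show ?thesis .
qed

lemma Re_hermitian_form:
  assumes M: "M \<in> carrier_mat n n" and y: "y \<in> carrier_vec n"
  shows "Re (hermitian_form M y) =
    map_vec Re y \<bullet> (M *\<^sub>v map_vec Re y) + map_vec Im y \<bullet> (M *\<^sub>v map_vec Im y)"
proof -
  have Re_term: "Re (cnj u * complex_of_real r * w) = r * (Re u * Re w) + r * (Im u * Im w)"
    for u w r
    by (simp add: algebra_simps)
  have "Re (hermitian_form M y) = (\<Sum>i<n. \<Sum>j<n.
      M$$(i,j) * (Re (y$i) * Re (y$j)) + M$$(i,j) * (Im (y$i) * Im (y$j)))"
    using y unfolding hermitian_form_def by (simp only: Re_sum Re_term carrier_vecD)
  also have "\<dots> = map_vec Re y \<bullet> (M *\<^sub>v map_vec Re y) + map_vec Im y \<bullet> (M *\<^sub>v map_vec Im y)"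
    using y by (simp add: sum.distrib scalar_prod_mult_mat_vec_double_sum[OF M])
  finally show ?thesis .
qed

lemma Im_hermitian_form:
  assumes M: "M \<in> carrier_mat n n" and sym: "transpose_mat M = M" and y: "y \<in> carrier_vec n"
  shows "Im (hermitian_form M y) = 0"
proof -
  have Im_term: "Im (cnj u * complex_of_real r * w) = r * (Re u * Im w) - r * (Im u * Re w)"
    for u w r
    by (simp add: algebra_simps)
  have M_sym: "M$$(i,j) = M$$(j,i)" if "i < n" "j < n" for i j
    by (metis M carrier_matD index_transpose_mat(1) sym that)
  have "Im (hermitian_form M y) = (\<Sum>i<n. \<Sum>j<n. M$$(i,j) * (Re (y$i) * Im (y$j)))
      - (\<Sum>i<n. \<Sum>j<n. M$$(i,j) * (Im (y$i) * Re (y$j)))"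
    using y unfolding hermitian_form_def by (simp only: Im_sum Im_term carrier_vecD sum_subtractf)
  also have "(\<Sum>i<n. \<Sum>j<n. M$$(i,j) * (Im (y$i) * Re (y$j)))
      = (\<Sum>j<n. \<Sum>i<n. M$$(i,j) * (Im (y$i) * Re (y$j)))"
    by (rule sum.swap)
  also have "\<dots> = (\<Sum>i<n. \<Sum>j<n. M$$(i,j) * (Re (y$i) * Im (y$j)))"
    by (intro sum.cong refl) (simp add: M_sym mult_ac)
  finally show ?thesis by simp
qed

lemma spd_scalar_prod_nonneg:
  assumes "spd M n" and "a \<in> carrier_vec n"
  shows "a \<bullet> (M *\<^sub>v a) \<ge> 0"
  using assms unfolding spd_def by (cases "a = 0\<^sub>v n") force+

lemma spd_hermitian_form_pos:
  assumes M: "spd M n" and y: "y \<in> carrier_vec n" and y0: "y \<noteq> 0\<^sub>v n"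
  obtains r where "r > 0" and "hermitian_form M y = of_real r"
proof
  have Mc: "M \<in> carrier_mat n n" and sym: "transpose_mat M = M"
    using M unfolding spd_def by auto
  have "map_vec Re y \<noteq> 0\<^sub>v n \<or> map_vec Im y \<noteq> 0\<^sub>v n"
    using y y0 by (auto simp: vec_eq_iff complex_eq_iff)
  then show "Re (hermitian_form M y) > 0"
    unfolding Re_hermitian_form[OF Mc y]
    using M y spd_scalar_prod_nonneg[OF M] unfolding spd_def
    by (metis add_nonneg_pos add_pos_nonneg map_carrier_vec)
  show "hermitian_form M y = of_real (Re (hermitian_form M y))"
    using Im_hermitian_form[OF Mc sym y] by (simp add: complex_eq_iff)
qed

lemma hermitian_form_mult_mat_vec:
  assumes M: "M \<in> carrier_mat n n" and y: "y \<in> carrier_vec n"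
  shows "hermitian_form M y = (\<Sum>i<n. cnj (y$i) * (cmat M *\<^sub>v y)$i)"
proof -
  have "(cmat M *\<^sub>v y)$i = (\<Sum>j<n. of_real (M$$(i,j)) * y$j)" if "i < n" for i
    using M y that by (auto simp: cmat_def scalar_prod_def lessThan_atLeast0 intro!: sum.cong)
  then show ?thesis
    using y unfolding hermitian_form_def
    by (auto simp: sum_distrib_left mult.assoc intro!: sum.cong)
qed

lemma hermitian_form_linear:
  assumes y: "y \<in> carrier_vec n"
    and M: "\<And>i j. i < n \<Longrightarrow> j < n \<Longrightarrow> M$$(i,j) = a * M1$$(i,j) + b * M2$$(i,j)"
  shows "hermitian_form M y = of_real a * hermitian_form M1 y + of_real b * hermitian_form M2 y"
  using y M unfolding hermitian_form_def
  by (simp add: sum.distrib sum_distrib_left algebra_simps)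

lemma spd_pencil_eigenvalue_bounds:
  assumes K: "spd K n" and S: "spd S n" and D: "spd (2 \<cdot>\<^sub>m S - K) n"
    and y: "y \<in> carrier_vec n" "y \<noteq> 0\<^sub>v n"
    and eigen: "cmat K *\<^sub>v y = \<mu> \<cdot>\<^sub>v (cmat S *\<^sub>v y)"
  shows "\<mu> \<in> \<real> \<and> 0 < Re \<mu> \<and> Re \<mu> < 2"
proof -
  have Kc: "K \<in> carrier_mat n n" and Sc: "S \<in> carrier_mat n n"
    using K S unfolding spd_def by auto
  obtain k where k: "k > 0" "hermitian_form K y = of_real k"
    using spd_hermitian_form_pos[OF K y] .
  obtain s where s: "s > 0" "hermitian_form S y = of_real s"
    using spd_hermitian_form_pos[OF S y] .
  obtain d where d: "d > 0" "hermitian_form (2 \<cdot>\<^sub>m S - K) y = of_real d"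
    using spd_hermitian_form_pos[OF D y] .
  have "hermitian_form K y = \<mu> * hermitian_form S y"
    using Kc Sc y
    unfolding hermitian_form_mult_mat_vec[OF Kc y(1)] hermitian_form_mult_mat_vec[OF Sc y(1)] eigen
    by (auto simp: sum_distrib_left mult.left_commute cmat_def intro!: sum.cong)
  then have \<mu>: "\<mu> = of_real (k / s)"
    using k s by (simp add: field_simps)
  have "of_real d = of_real 2 * hermitian_form S y + of_real (-1) * hermitian_form K y"
    unfolding d(2)[symmetric] using Kc Sc by (intro hermitian_form_linear[OF y(1)]) auto
  then have "complex_of_real d = complex_of_real (2 * s - k)"
    using k s by simp
  then have "d = 2 * s - k"
    by (simp only: of_real_eq_iff)
  then show ?thesis
    unfolding \<mu> using k s d by (simp add: field_simps)
qed

section \<open>Vectors and block matrices\<close>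

lemma smult_append_vec: "k \<cdot>\<^sub>v (a @\<^sub>v b) = (k \<cdot>\<^sub>v a) @\<^sub>v (k \<cdot>\<^sub>v b)"
  by (intro eq_vecI) (auto simp: nth_append)

lemma append_vec3_cases:
  assumes "v \<in> carrier_vec (a + b + c)"
  obtains x y z where "x \<in> carrier_vec a" "y \<in> carrier_vec b" "z \<in> carrier_vec c"
    and "v = x @\<^sub>v y @\<^sub>v z"
proof -
  have v: "v \<in> carrier_vec (a + (b + c))"
    using assms by (simp add: add.assoc)
  define r where "r = vec_last v (b + c)"
  have "v = vec_first v a @\<^sub>v vec_first r b @\<^sub>v vec_last r c"
    using v unfolding r_def by simp
  then show ?thesis
    using that vec_first_carrier vec_last_carrier by blast
qed

lemma diff_eq_zero_vec_iff:
  fixes a b :: "'a :: ab_group_add vec"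
  shows "a \<in> carrier_vec n \<Longrightarrow> b \<in> carrier_vec n \<Longrightarrow> a - b = 0\<^sub>v n \<longleftrightarrow> a = b"
  by (auto simp: vec_eq_iff)

lemma add_right_cancel_vec:
  fixes a b c :: "'a :: ab_group_add vec"
  shows "a \<in> carrier_vec n \<Longrightarrow> b \<in> carrier_vec n \<Longrightarrow> c \<in> carrier_vec n \<Longrightarrow> a + c = b + c \<longleftrightarrow> a = b"
  by (auto simp: vec_eq_iff)

lemma add_left_eq_self_vec:
  fixes a b :: "'a :: ab_group_add vec"
  shows "a \<in> carrier_vec n \<Longrightarrow> b \<in> carrier_vec n \<Longrightarrow> a + b = b \<longleftrightarrow> a = 0\<^sub>v n"
  by (auto simp: vec_eq_iff)

lemma add_eq_smult_add_iff:
  fixes \<mu> :: "'a :: field"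
  assumes x: "x \<in> carrier_vec k" and a: "a \<in> carrier_vec k" and \<mu>: "\<mu> \<noteq> 1"
  shows "x + a = \<mu> \<cdot>\<^sub>v (x + a) \<longleftrightarrow> x = - a"
proof -
  have "x$i + a$i = \<mu> * (x$i + a$i) \<longleftrightarrow> x$i = - a$i" for i
    using \<mu> by (simp add: add_eq_0_iff2)
  then show ?thesis
    using x a by (auto simp: vec_eq_iff)
qed

lemma add_eq_smult_iff:
  fixes \<mu> :: "'a :: field"
  assumes g: "g \<in> carrier_vec k" and z: "z \<in> carrier_vec k" and \<mu>: "\<mu> \<noteq> 1"
  shows "g + z = \<mu> \<cdot>\<^sub>v z \<longleftrightarrow> z = (1 / (\<mu> - 1)) \<cdot>\<^sub>v g"
proof -
  have "\<mu> - 1 \<noteq> 0"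
    using \<mu> by simp
  then have "g$i + z$i = \<mu> * z$i \<longleftrightarrow> z$i = 1 / (\<mu> - 1) * g$i" for i
    by (auto simp: field_simps)
  then show ?thesis
    using g z by (auto simp: vec_eq_iff)
qed

lemma shifted_smult_eq_iff:
  fixes \<mu> :: "'a :: field"
  assumes u: "u \<in> carrier_vec k" and w: "w \<in> carrier_vec k" and t: "t \<in> carrier_vec k"
    and \<mu>: "\<mu> \<noteq> 1"
  shows "u + (1 / (\<mu> - 1)) \<cdot>\<^sub>v t = \<mu> \<cdot>\<^sub>v (w + (1 / (\<mu> - 1)) \<cdot>\<^sub>v t) \<longleftrightarrow> u - t = \<mu> \<cdot>\<^sub>v w"
proof -
  define c where "c = 1 / (\<mu> - 1)"
  have c: "c - \<mu> * c = -1"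
    using \<mu> unfolding c_def by (simp add: field_simps)
  have "r + c * s - \<mu> * (v + c * s) = r - \<mu> * v + (c - \<mu> * c) * s" for r s v :: 'a
    by (simp add: algebra_simps)
  then have "r + c * s - \<mu> * (v + c * s) = r - s - \<mu> * v" for r s v :: 'a
    unfolding c by simp
  then have "r + c * s = \<mu> * (v + c * s) \<longleftrightarrow> r - s = \<mu> * v" for r s v
    by (metis eq_iff_diff_eq_0)
  then show ?thesis
    using u w t unfolding c_def[symmetric] by (auto simp: vec_eq_iff)
qed

lemma mult_mat_vec_zero: "A \<in> carrier_mat r c \<Longrightarrow> A *\<^sub>v 0\<^sub>v c = (0\<^sub>v r :: 'a :: semiring_0 vec)"
  by (intro eq_vecI) (auto simp: scalar_prod_def)

lemma spd_det_nonzero: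
  assumes "spd M n"
  shows "det M \<noteq> 0"
proof
  assume "det M = 0"
  moreover have M: "M \<in> carrier_mat n n"
    using assms unfolding spd_def by auto
  ultimately obtain v where v: "v \<in> carrier_vec n" "v \<noteq> 0\<^sub>v n" "M *\<^sub>v v = 0\<^sub>v n"
    using det_0_iff_vec_prod_zero_field[OF M] by auto
  then have "v \<bullet> (M *\<^sub>v v) > 0"
    using assms unfolding spd_def by auto
  with v show False
    by simp
qed

lemma mat_inverse_the:
  fixes M :: "'a :: field mat"
  assumes M: "M \<in> carrier_mat n n" and det: "det M \<noteq> 0"
  shows "the (mat_inverse M) \<in> carrier_mat n n"
    and "M * the (mat_inverse M) = 1\<^sub>m n" and "the (mat_inverse M) * M = 1\<^sub>m n"
proof -
  have "M \<in> Units (ring_mat TYPE('a) n ())"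
    by (rule det_non_zero_imp_unit[OF M det])
  then obtain Mi where "mat_inverse M = Some Mi"
    using mat_inverse(1)[OF M] by fastforce
  with mat_inverse(2)[OF M this] show "the (mat_inverse M) \<in> carrier_mat n n"
    and "M * the (mat_inverse M) = 1\<^sub>m n" and "the (mat_inverse M) * M = 1\<^sub>m n"
    by auto
qed

lemma inverse_mult_eigen_iff:
  fixes M :: "'a :: field mat"
  assumes M: "M \<in> carrier_mat n n" and Mi: "Mi \<in> carrier_mat n n"
    and inv: "M * Mi = 1\<^sub>m n" "Mi * M = 1\<^sub>m n"
    and A: "A \<in> carrier_mat n n" and v: "v \<in> carrier_vec n"
  shows "(Mi * A) *\<^sub>v v = \<mu> \<cdot>\<^sub>v v \<longleftrightarrow> A *\<^sub>v v = \<mu> \<cdot>\<^sub>v (M *\<^sub>v v)"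
proof
  assume "(Mi * A) *\<^sub>v v = \<mu> \<cdot>\<^sub>v v"
  then have "M *\<^sub>v (Mi *\<^sub>v (A *\<^sub>v v)) = M *\<^sub>v (\<mu> \<cdot>\<^sub>v v)"
    using Mi A v by (simp add: assoc_mult_mat_vec)
  then show "A *\<^sub>v v = \<mu> \<cdot>\<^sub>v (M *\<^sub>v v)"
    using M Mi A v inv
    by (simp add: assoc_mult_mat_vec[symmetric, of M n n Mi] mult_mat_vec[OF M v])
next
  assume "A *\<^sub>v v = \<mu> \<cdot>\<^sub>v (M *\<^sub>v v)"
  then have "(Mi * A) *\<^sub>v v = Mi *\<^sub>v (\<mu> \<cdot>\<^sub>v (M *\<^sub>v v))"
    using Mi A v by (simp add: assoc_mult_mat_vec)
  then show "(Mi * A) *\<^sub>v v = \<mu> \<cdot>\<^sub>v v"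
    using M Mi v inv by (simp add: mult_mat_vec[OF Mi] assoc_mult_mat_vec[symmetric, of Mi n n M])
qed

lemma hcat_zero_mult_vec:
  fixes X :: "'a :: comm_ring_1 mat"
  assumes X: "X \<in> carrier_mat p n" and y: "y \<in> carrier_vec n" and z: "z \<in> carrier_vec q"
  shows "hcat X (0\<^sub>m p q) *\<^sub>v (y @\<^sub>v z) = X *\<^sub>v y"
proof -
  have "hcat X (0\<^sub>m p q) *\<^sub>v (y @\<^sub>v z)
      = (X *\<^sub>v y + 0\<^sub>m p q *\<^sub>v z) @\<^sub>v (0\<^sub>m 0 n *\<^sub>v y + 0\<^sub>m 0 q *\<^sub>v z)"
    unfolding hcat_def using X y z by (subst four_block_mat_mult_vec[of _ p n _ q _ 0]) auto
  also have "\<dots> = X *\<^sub>v y"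
    using X y z by (intro eq_vecI) auto
  finally show ?thesis .
qed

lemma block3_mult_vec:
  fixes X :: "'a :: comm_ring_1 mat"
  assumes X: "X \<in> carrier_mat p n" and Y: "Y \<in> carrier_mat n n" and Z: "Z \<in> carrier_mat n q"
    and U: "U \<in> carrier_mat q n" and V: "V \<in> carrier_mat q q"
    and x: "x \<in> carrier_vec p" and y: "y \<in> carrier_vec n" and z: "z \<in> carrier_vec q"
  shows "four_block_mat (1\<^sub>m p) (hcat X (0\<^sub>m p q)) (0\<^sub>m (n + q) p) (four_block_mat Y Z U V)
      *\<^sub>v (x @\<^sub>v y @\<^sub>v z)
    = (x + X *\<^sub>v y) @\<^sub>v (Y *\<^sub>v y + Z *\<^sub>v z) @\<^sub>v (U *\<^sub>v y + V *\<^sub>v z)"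
proof -
  have H: "hcat X (0\<^sub>m p q) \<in> carrier_mat p (n + q)"
    unfolding hcat_def using X by auto
  have "four_block_mat Y Z U V *\<^sub>v (y @\<^sub>v z) = (Y *\<^sub>v y + Z *\<^sub>v z) @\<^sub>v (U *\<^sub>v y + V *\<^sub>v z)"
    using Y Z U V y z by (intro four_block_mat_mult_vec) auto
  moreover have "0\<^sub>m (n + q) p *\<^sub>v x + ((Y *\<^sub>v y + Z *\<^sub>v z) @\<^sub>v (U *\<^sub>v y + V *\<^sub>v z))
      = (Y *\<^sub>v y + Z *\<^sub>v z) @\<^sub>v (U *\<^sub>v y + V *\<^sub>v z)"
    using x y z Y Z U V by (intro eq_vecI) auto
  ultimately show ?thesis
    using H x y z Y Z U V
    by (subst four_block_mat_mult_vec) (auto simp: hcat_zero_mult_vec[OF X y z])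
qed

lemma cmat_carrier_iff [simp]: "cmat M \<in> carrier_mat r c \<longleftrightarrow> M \<in> carrier_mat r c"
  unfolding cmat_def carrier_mat_def by auto

lemma cmat_mult:
  assumes "X \<in> carrier_mat a b" "Y \<in> carrier_mat b c"
  shows "cmat (X * Y) = cmat X * cmat Y"
  unfolding cmat_def by (rule of_real_hom.mat_hom_mult[OF assms])

lemma cmat_one [simp]: "cmat (1\<^sub>m k) = 1\<^sub>m k"
  unfolding cmat_def by (rule of_real_hom.mat_hom_one)

lemma cmat_zero [simp]: "cmat (0\<^sub>m r c) = 0\<^sub>m r c"
  unfolding cmat_def by (intro eq_matI) auto

lemma cmat_minus:
  assumes "X \<in> carrier_mat a b" "Y \<in> carrier_mat a b"
  shows "cmat (X - Y) = cmat X - cmat Y"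
  unfolding cmat_def using assms by (intro eq_matI) auto

lemma cmat_block3:
  assumes "X \<in> carrier_mat p n" "Y \<in> carrier_mat n n" "Z \<in> carrier_mat n q"
    "U \<in> carrier_mat q n" "V \<in> carrier_mat q q"
  shows "cmat (four_block_mat (1\<^sub>m p) (hcat X (0\<^sub>m p q)) (0\<^sub>m (n + q) p) (four_block_mat Y Z U V))
    = four_block_mat (1\<^sub>m p) (hcat (cmat X) (0\<^sub>m p q)) (0\<^sub>m (n + q) p)
        (four_block_mat (cmat Y) (cmat Z) (cmat U) (cmat V))"
  unfolding cmat_def hcat_def using assms by (intro eq_matI) auto

lemma scalar_prod_transpose_mult_vec:
  fixes A :: "'a :: comm_ring_1 mat"
  assumes A: "A \<in> carrier_mat m n" and y: "y \<in> carrier_vec n"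
  shows "y \<bullet> (transpose_mat A *\<^sub>v (A *\<^sub>v y)) = (A *\<^sub>v y) \<bullet> (A *\<^sub>v y)"
  using A y by (subst comm_scalar_prod[of _ n]) (auto intro: transpose_vec_mult_scalar)

lemma spd_gram_diff_mult_vec_nonzero:
  assumes spd: "spd (transpose_mat A1 * A1 - transpose_mat A2 * A2) n"
    and A1: "A1 \<in> carrier_mat p n" and A2: "A2 \<in> carrier_mat q n"
    and y: "y \<in> carrier_vec n" "y \<noteq> 0\<^sub>v n"
  shows "A1 *\<^sub>v y \<noteq> 0\<^sub>v p"
proof
  assume A1y: "A1 *\<^sub>v y = 0\<^sub>v p"
  have "y \<bullet> ((transpose_mat A1 * A1 - transpose_mat A2 * A2) *\<^sub>v y)
      = (A1 *\<^sub>v y) \<bullet> (A1 *\<^sub>v y) - (A2 *\<^sub>v y) \<bullet> (A2 *\<^sub>v y)"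
    using A1 A2 y
    by (simp add: minus_mult_distrib_mat_vec[of _ n n] scalar_prod_minus_distrib[of _ n]
        scalar_prod_transpose_mult_vec)
  also have "\<dots> \<le> 0"
    unfolding A1y by (simp add: scalar_prod_def sum_nonneg)
  finally show False
    using spd y unfolding spd_def by auto
qed

section \<open>Eigenvectors for distinct eigenvalues\<close>

lemma mult_mat_vec_sum_eigenvectors:
  fixes M :: "'a :: comm_ring_1 mat"
  assumes M: "M \<in> carrier_mat n n" and X: "X \<subseteq> carrier_vec n"
    and eigen: "\<And>v. v \<in> X \<Longrightarrow> M *\<^sub>v v = f v \<cdot>\<^sub>v v"
  shows "M *\<^sub>v vec n (\<lambda>j. \<Sum>v\<in>X. a v * v$j) = vec n (\<lambda>i. \<Sum>v\<in>X. a v * f v * v$i)"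
proof (rule eq_vecI)
  fix i assume "i < dim_vec (vec n (\<lambda>i. \<Sum>v\<in>X. a v * f v * v$i))"
  then have i: "i < n"
    by simp
  have "(M *\<^sub>v vec n (\<lambda>j. \<Sum>v\<in>X. a v * v$j)) $ i = (\<Sum>j<n. M$$(i,j) * (\<Sum>v\<in>X. a v * v$j))"
    using M i by (auto simp: scalar_prod_def lessThan_atLeast0 intro!: sum.cong)
  also have "\<dots> = (\<Sum>v\<in>X. a v * (\<Sum>j<n. M$$(i,j) * v$j))"
    unfolding sum_distrib_left by (subst sum.swap) (intro sum.cong refl, simp add: mult_ac)
  also have "\<dots> = (\<Sum>v\<in>X. a v * (M *\<^sub>v v)$i)"
    using M X i
    by (intro sum.cong refl) (auto simp: scalar_prod_def lessThan_atLeast0 intro!: sum.cong)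
  also have "\<dots> = (\<Sum>v\<in>X. a v * f v * v$i)"
    using eigen X i by (intro sum.cong) auto
  finally show "(M *\<^sub>v vec n (\<lambda>j. \<Sum>v\<in>X. a v * v$j)) $ i = vec n (\<lambda>i. \<Sum>v\<in>X. a v * f v * v$i) $ i"
    using i by simp
qed (use M in simp)

lemma sum_eigenvectors_shift:
  fixes M :: "'a :: comm_ring_1 mat"
  assumes M: "M \<in> carrier_mat n n" and X: "X \<subseteq> carrier_vec n"
    and eigen: "\<And>v. v \<in> X \<Longrightarrow> M *\<^sub>v v = f v \<cdot>\<^sub>v v"
    and zero: "\<forall>i<n. (\<Sum>v\<in>X. a v * v$i) = 0"
  shows "\<forall>i<n. (\<Sum>v\<in>X. a v * (f v - l) * v$i) = 0"
proof -
  have "vec n (\<lambda>j. \<Sum>v\<in>X. a v * v$j) = 0\<^sub>v n"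
    using zero by (intro eq_vecI) auto
  then have "vec n (\<lambda>i. \<Sum>v\<in>X. a v * f v * v$i) = M *\<^sub>v 0\<^sub>v n"
    by (simp only: mult_mat_vec_sum_eigenvectors[OF M X eigen, symmetric])
  also have "\<dots> = 0\<^sub>v n"
    by (rule mult_mat_vec_zero[OF M])
  finally have "\<forall>i<n. (\<Sum>v\<in>X. a v * f v * v$i) = 0"
    by (simp add: vec_eq_iff)
  moreover have "(\<Sum>v\<in>X. a v * (f v - l) * v$i) = (\<Sum>v\<in>X. a v * f v * v$i) - l * (\<Sum>v\<in>X. a v * v$i)"
    for i
    by (simp add: sum_subtractf sum_distrib_left algebra_simps)
  ultimately show ?thesis
    using zero by simp
qed

lemma mat_kernel_char_matrix_iff:
  fixes M :: "'a :: field mat"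
  assumes M: "M \<in> carrier_mat n n"
  shows "v \<in> mat_kernel (char_matrix M e) \<longleftrightarrow> v \<in> carrier_vec n \<and> M *\<^sub>v v = e \<cdot>\<^sub>v v"
proof (cases "v = 0\<^sub>v n")
  case True
  then show ?thesis
    using M mat_kernel[OF char_matrix_closed[OF M]] mult_mat_vec_zero[OF char_matrix_closed[OF M]]
    by auto
next
  case False
  then show ?thesis
    using M mat_kernel[OF char_matrix_closed[OF M]] eigenvector_char_matrix[OF M, of v e]
    unfolding eigenvector_def by auto
qed

lemma eigenspaces_inter:
  fixes M :: "'a :: field mat"
  assumes M: "M \<in> carrier_mat n n" and l: "l \<noteq> l'"
    and v: "v \<in> mat_kernel (char_matrix M l)" "v \<in> mat_kernel (char_matrix M l')"
  shows "v = 0\<^sub>v n"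
proof (rule eq_vecI)
  have v_carrier: "v \<in> carrier_vec n" and eq: "l \<cdot>\<^sub>v v = l' \<cdot>\<^sub>v v"
    using v mat_kernel_char_matrix_iff[OF M] by auto
  fix i assume "i < dim_vec (0\<^sub>v n)"
  then have "(l \<cdot>\<^sub>v v) $ i = (l' \<cdot>\<^sub>v v) $ i" "i < dim_vec v"
    using eq v_carrier by auto
  then have "l * v$i = l' * v$i"
    by simp
  then show "v $ i = 0\<^sub>v n $ i"
    using l \<open>i < dim_vec (0\<^sub>v n)\<close> by simp
qed (use v mat_kernel_char_matrix_iff[OF M] in auto)

context vec_space
begin

lemma lin_indpt_iff_coords:
  assumes fin: "finite X" and X: "X \<subseteq> carrier_vec n"
  shows "\<not> lin_dep X \<longleftrightarrow>
    (\<forall>a. (\<forall>i<n. (\<Sum>x\<in>X. a x * x$i) = 0) \<longrightarrow> (\<forall>x\<in>X. a x = 0))"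
proof -
  have lincomb_0: "lincomb a X = 0\<^sub>v n \<longleftrightarrow> (\<forall>i<n. (\<Sum>x\<in>X. a x * x$i) = 0)" for a
    using lincomb_dim[OF fin X, of a] lincomb_index[OF _ X] by (auto simp: vec_eq_iff)
  show ?thesis
  proof (intro iffI allI impI)
    fix a assume "\<not> lin_dep X" and "\<forall>i<n. (\<Sum>x\<in>X. a x * x$i) = 0"
    then have "a \<in> X \<rightarrow> {zero class_ring}"
      using not_lindepD[OF _ fin subset_refl, of a] lincomb_0 by auto
    then show "\<forall>x\<in>X. a x = 0"
      by (auto simp: class_ring_simps)
  next
    assume coords: "\<forall>a. (\<forall>i<n. (\<Sum>x\<in>X. a x * x$i) = 0) \<longrightarrow> (\<forall>x\<in>X. a x = 0)"
    show "\<not> lin_dep X"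
    proof (rule finite_lin_indpt2[OF fin X, unfolded class_ring_simps module_vec_simps])
      fix a assume "lincomb a X = 0\<^sub>v n"
      then show "\<forall>v\<in>X. a v = 0"
        using coords lincomb_0 by blast
    qed
  qed
qed

lemma zero_notin_lin_indpt: "\<not> lin_dep S \<Longrightarrow> S \<subseteq> carrier_vec n \<Longrightarrow> 0\<^sub>v n \<notin> S"
  using vs_zero_lin_dep[of S] by (simp add: module_vec_simps)

lemma lin_indpt_Un_eigenvectors:
  assumes M: "M \<in> carrier_mat n n"
    and S: "finite S" "S \<subseteq> mat_kernel (char_matrix M l)" "\<not> lin_dep S"
    and U: "finite U" "U \<subseteq> carrier_vec n" "\<not> lin_dep U"
    and eigen: "\<And>v. v \<in> U \<Longrightarrow> M *\<^sub>v v = f v \<cdot>\<^sub>v v \<and> f v \<noteq> l"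
  shows "\<not> lin_dep (S \<union> U)"
proof -
  have S_carrier: "S \<subseteq> carrier_vec n"
    using S(2) mat_kernel_char_matrix_iff[OF M] by auto
  have U_kernel: "v \<in> mat_kernel (char_matrix M (f v))" if "v \<in> U" for v
    using that U(2) eigen mat_kernel_char_matrix_iff[OF M] by auto
  have disj: "S \<inter> U = {}"
  proof (intro equals0I)
    fix v assume v: "v \<in> S \<inter> U"
    then have "v = 0\<^sub>v n"
      using S(2) U_kernel eigen eigenspaces_inter[OF M, of "f v" l v] by auto
    then show False
      using v zero_notin_lin_indpt[OF S(3) S_carrier] by auto
  qed
  define g where "g v = (if v \<in> S then l else f v)" for v
  have g: "M *\<^sub>v v = g v \<cdot>\<^sub>v v" if "v \<in> S \<union> U" for v
  proof (cases "v \<in> S")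
    case True
    then show ?thesis
      using S(2) mat_kernel_char_matrix_iff[OF M] unfolding g_def by auto
  next
    case False
    then show ?thesis
      using that eigen unfolding g_def by auto
  qed
  have T: "finite (S \<union> U)" "S \<union> U \<subseteq> carrier_vec n"
    using S(1) U(1,2) S_carrier by auto
  from U(3) have coords_U: "\<forall>b. (\<forall>i<n. (\<Sum>x\<in>U. b x * x$i) = 0) \<longrightarrow> (\<forall>x\<in>U. b x = 0)"
    unfolding lin_indpt_iff_coords[OF U(1,2)] .
  from S(3) have coords_S: "\<forall>b. (\<forall>i<n. (\<Sum>x\<in>S. b x * x$i) = 0) \<longrightarrow> (\<forall>x\<in>S. b x = 0)"
    unfolding lin_indpt_iff_coords[OF S(1) S_carrier] .
  show ?thesis
    unfolding lin_indpt_iff_coords[OF T]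
  proof (intro allI impI)
    fix a assume a: "\<forall>i<n. (\<Sum>x\<in>S \<union> U. a x * x$i) = 0"
    have "(\<Sum>x\<in>S \<union> U. a x * (g x - l) * x$i) = (\<Sum>x\<in>U. a x * (f x - l) * x$i)" for i
      using disj unfolding sum.union_disjoint[OF S(1) U(1) disj] g_def
      by (auto intro!: sum.cong)
    then have "\<forall>i<n. (\<Sum>x\<in>U. a x * (f x - l) * x$i) = 0"
      using sum_eigenvectors_shift[OF M T(2) g a, of l] by simp
    then have "\<forall>x\<in>U. a x * (f x - l) = 0"
      by (rule coords_U[THEN spec, THEN mp])
    then have aU: "\<forall>x\<in>U. a x = 0"
      using eigen by auto
    then have "\<forall>i<n. (\<Sum>x\<in>S. a x * x$i) = 0"
      using a by (simp add: sum.union_disjoint[OF S(1) U(1) disj])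
    then have "\<forall>x\<in>S. a x = 0"
      by (rule coords_S[THEN spec, THEN mp])
    then show "\<forall>x\<in>S \<union> U. a x = 0"
      using aU by blast
  qed
qed

lemma lin_indpt_UN_eigenspaces:
  assumes M: "M \<in> carrier_mat n n" and fin: "finite L"
    and S: "\<And>l. l \<in> L \<Longrightarrow> S l \<subseteq> mat_kernel (char_matrix M l) \<and> finite (S l) \<and> \<not> lin_dep (S l)"
  shows "\<not> lin_dep (\<Union>l\<in>L. S l)"
  using fin S
proof (induct L rule: finite_induct)
  case empty
  show ?case
    by (simp add: lin_indpt_iff_coords)
next
  case (insert l0 L)
  define U where "U = (\<Union>l\<in>L. S l)"
  have "\<forall>v\<in>U. \<exists>l. l \<in> L \<and> v \<in> S l"
    unfolding U_def by blast
  then obtain f where f: "\<And>v. v \<in> U \<Longrightarrow> f v \<in> L \<and> v \<in> S (f v)"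
    by metis
  have "M *\<^sub>v v = f v \<cdot>\<^sub>v v \<and> f v \<noteq> l0" if "v \<in> U" for v
    using that f[of v] insert(2) insert(4)[of "f v"] mat_kernel_char_matrix_iff[OF M] by auto
  moreover have "finite U" "U \<subseteq> carrier_vec n" "\<not> lin_dep U"
    unfolding U_def using insert mat_kernel_char_matrix_iff[OF M] by blast+
  ultimately have "\<not> lin_dep (S l0 \<union> U)"
    using insert(4)[of l0] by (intro lin_indpt_Un_eigenvectors[OF M]) auto
  then show ?case
    unfolding U_def by simp
qed

lemma card_UN_eigenspaces:
  assumes M: "M \<in> carrier_mat n n" and fin: "finite L"
    and S: "\<And>l. l \<in> L \<Longrightarrow> S l \<subseteq> mat_kernel (char_matrix M l) \<and> finite (S l) \<and> \<not> lin_dep (S l)"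
  shows "card (\<Union>l\<in>L. S l) = (\<Sum>l\<in>L. card (S l))"
proof (rule card_UN_disjoint[OF fin])
  show "\<forall>l\<in>L. finite (S l)"
    using S by auto
  have "v = 0\<^sub>v n" if "l \<in> L" "l' \<in> L" "l \<noteq> l'" "v \<in> S l" "v \<in> S l'" for l l' v
    using S[OF that(1)] S[OF that(2)] that(4,5) eigenspaces_inter[OF M that(3)] by auto
  moreover have "0\<^sub>v n \<notin> S l" if "l \<in> L" for l
    using S[OF that] mat_kernel_carrier[of "char_matrix M l" n n] char_matrix_closed[OF M]
      zero_notin_lin_indpt[of "S l"] by auto
  ultimately show "\<forall>l\<in>L. \<forall>l'\<in>L. l \<noteq> l' \<longrightarrow> S l \<inter> S l' = {}"
    by blast
qed

lemma lin_indpt_kernel_card_eq_kernel_dim: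
  assumes A: "A \<in> carrier_mat nr n"
  obtains b where "finite b" "b \<subseteq> mat_kernel A" "\<not> lin_dep b" "card b = kernel_dim A"
proof -
  interpret KA: kernel nr n A
    by unfold_locales (rule A)
  obtain b where b: "finite b" "KA.basis b"
    using kernel_basis_exists[OF A] by auto
  have sub: "b \<subseteq> mat_kernel A"
    using b(2) unfolding KA.Ker.basis_def by auto
  show ?thesis
  proof (rule that[OF b(1) sub])
    show "\<not> lin_dep b"
      using b(2) KA.lindep_same[OF sub] unfolding KA.Ker.basis_def by auto
    show "card b = kernel_dim A"
      using KA.Ker.dim_basis[OF b] by simp
  qed
qed

end

section \<open>Kernels and padded bases\<close>

lemma (in kernel) basis_iff_lin_indpt_span:
  "basis S \<longleftrightarrow> S \<subseteq> mat_kernel A \<and> \<not> NC.lin_dep S \<and> NC.span S = mat_kernel A"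
  unfolding Ker.basis_def using lindep_same span_same by auto

lemma (in kernel) fin_dim: "Ker.fin_dim"
proof -
  obtain b where "finite b" "basis b"
    using kernel_basis_exists[OF A] by auto
  then show ?thesis
    unfolding Ker.fin_dim_def Ker.basis_def by auto
qed

lemma kernel_dim_eq_of_bij_mult_mat_vec:
  fixes A :: "'a :: field mat"
  assumes A: "A \<in> carrier_mat nr n" and B: "B \<in> carrier_mat mr m" and T: "T \<in> carrier_mat m n"
    and inj: "inj_on ((*\<^sub>v) T) (mat_kernel A)"
    and image: "(*\<^sub>v) T ` mat_kernel A = mat_kernel B"
  shows "kernel_dim A = kernel_dim B"
proof -
  interpret KA: kernel nr n A
    by unfold_locales (rule A)
  interpret KB: kernel mr m B
    by unfold_locales (rule B)
  have carrier: "v \<in> carrier_vec n" if "v \<in> mat_kernel A" for v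
    using that mat_kernel_carrier[OF A] by auto
  have "T *\<^sub>v (u + v) = T *\<^sub>v u + T *\<^sub>v v" if "u \<in> mat_kernel A" "v \<in> mat_kernel A" for u v
    using mult_add_distrib_mat_vec[OF T carrier carrier] that .
  moreover have "T *\<^sub>v (c \<cdot>\<^sub>v v) = c \<cdot>\<^sub>v (T *\<^sub>v v)" if "v \<in> mat_kernel A" for c v
    using mult_mat_vec[OF T carrier] that .
  ultimately have "(*\<^sub>v) T \<in> LinearCombinations.module_hom class_ring KA.VK KB.VK"
    using image by (auto simp: LinearCombinations.module_hom_def module_vec_simps)
  then have "linear_map class_ring KA.VK KB.VK ((*\<^sub>v) T)"
    using KA.Ker.vectorspace_axioms KB.Ker.vectorspace_axioms
    unfolding linear_map_def mod_hom_def mod_hom_axioms_def vectorspace_def by auto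
  then have "KA.dim = KB.dim"
    using inj image by (intro linear_map.dim_eq[OF _ KA.fin_dim]) auto
  then show ?thesis
    by simp
qed

lemma cbasis_carrier_vec:
  assumes "cbasis k (carrier_vec k) X"
  shows "X \<subseteq> carrier_vec k" and "\<not> module.lin_dep class_ring (module_vec TYPE(complex) k) X"
    and "LinearCombinations.module.span class_ring (module_vec TYPE(complex) k) X = carrier_vec k"
    and "finite X" and "card X = k"
proof -
  interpret V: vec_space "TYPE(complex)" k .
  have mv: "module_vec TYPE(complex) k\<lparr>carrier := carrier_vec k\<rparr> = module_vec TYPE(complex) k"
    by (simp add: module_vec_def)
  have b: "V.basis X"
    using assms unfolding cbasis_def mv .
  then show "X \<subseteq> carrier_vec k" and "\<not> V.lin_dep X" and "V.span X = carrier_vec k"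
    unfolding V.basis_def by auto
  then show fin: "finite X"
    using V.fin_dim_li_fin[OF V.fin_dim] by auto
  show "card X = k"
    using V.dim_basis[OF fin b] V.dim_is_n by simp
qed

context vardim
begin

lemma submodule_sum_padr_padl:
  fixes V W :: "'a vec set"
  assumes V: "V \<subseteq> carrier_vec a" and W: "W \<subseteq> carrier_vec b"
  shows "module.submodule_sum (M (a + b)) (padr b ` V) (padl a ` W)
    = {x @\<^sub>v y | x y. x \<in> V \<and> y \<in> W}"
proof -
  interpret VAB: vectorspace class_ring "M (a + b)"
    using vec_vs .
  have pad_add: "padr b x + padl a y = x @\<^sub>v y" if "x \<in> V" "y \<in> W" for x y
  proof -
    have "x \<in> carrier_vec a" "y \<in> carrier_vec b"
      using that V W by auto
    then show ?thesis
      by (intro eq_vecI) auto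
  qed
  show ?thesis
  proof (intro equalityI subsetI)
    fix v assume "v \<in> VAB.submodule_sum (padr b ` V) (padl a ` W)"
    then obtain x y where "x \<in> V" "y \<in> W" "v = padr b x + padl a y"
      unfolding VAB.submodule_sum_def by (auto simp: module_vec_simps)
    then show "v \<in> {x @\<^sub>v y | x y. x \<in> V \<and> y \<in> W}"
      using pad_add by auto
  next
    fix v assume "v \<in> {x @\<^sub>v y | x y. x \<in> V \<and> y \<in> W}"
    then obtain x y where xy: "x \<in> V" "y \<in> W" "v = x @\<^sub>v y"
      by auto
    have "(padr b x, padl a y) \<in> {(x, y). x \<in> padr b ` V \<and> y \<in> padl a ` W}"
      using xy by auto
    then show "v \<in> VAB.submodule_sum (padr b ` V) (padl a ` W)"
      unfolding VAB.submodule_sum_def using xy pad_add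
      by (auto simp: module_vec_simps intro!: rev_image_eqI)
  qed
qed

lemma span_padr_Un_padl:
  fixes X Y :: "'a vec set"
  assumes X: "X \<subseteq> carrier_vec a" and Y: "Y \<subseteq> carrier_vec b"
  shows "span (a + b) (padr b ` X \<union> padl a ` Y)
    = {x @\<^sub>v y | x y. x \<in> span a X \<and> y \<in> span b Y}"
proof -
  interpret VA: vectorspace class_ring "M a"
    using vec_vs .
  interpret VB: vectorspace class_ring "M b"
    using vec_vs .
  interpret VAB: vectorspace class_ring "M (a + b)"
    using vec_vs .
  have "span (a + b) (padr b ` X \<union> padl a ` Y)
      = VAB.submodule_sum (span (a + b) (padr b ` X)) (span (a + b) (padl a ` Y))"
    using padr_image[OF X] padl_image[OF Y]
    by (intro VAB.span_union_is_sum) (auto simp: module_vec_simps)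
  also have "span (a + b) (padr b ` X) = padr b ` span a X"
    using span_pad(1)[OF X] by simp
  also have "span (a + b) (padl a ` Y) = padl a ` span b Y"
    using span_pad(2)[OF Y, of a] by (simp add: add.commute)
  finally show ?thesis
    using VA.span_is_subset2[of X] VB.span_is_subset2[of Y] X Y
    by (simp add: submodule_sum_padr_padl module_vec_simps)
qed

lemma card_padr_Un_padl:
  fixes X Y :: "'a vec set"
  assumes X: "X \<subseteq> carrier_vec a" "finite X" "0\<^sub>v a \<notin> X" and Y: "Y \<subseteq> carrier_vec b" "finite Y"
  shows "card (padr b ` X \<union> padl a ` Y) = card X + card Y"
proof -
  have "card (padr b ` X) = card X"
    using inj_on_subset[OF padr_inj X(1)] by (rule card_image)
  moreover have "card (padl a ` Y) = card Y"
    using inj_on_subset[OF padl_inj Y(1)] by (rule card_image)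
  ultimately show ?thesis
    using pad_disjoint[OF X(1,3) Y(1)] X(2) Y(2) by (simp add: card_Un_disjoint)
qed

end

section \<open>The preconditioned saddle point matrix\<close>

locale preconditioned_saddle_point =
  fixes p n q :: nat and A1 A2 Ph :: "real mat"
  assumes n_pos: "0 < n"
    and A1: "A1 \<in> carrier_mat p n" and A2: "A2 \<in> carrier_mat q n"
    and K_spd: "spd (Pmat A1 - transpose_mat A2 * A2) n"
    and Ph_spd: "spd Ph n"
    and cond: "spd (2 \<cdot>\<^sub>m Ph - Pmat A1 + transpose_mat A2 * A2) n"
begin

sublocale vardim "TYPE(complex)" .

abbreviation "N \<equiv> p + n + q"
abbreviation "P \<equiv> Pmat A1"
abbreviation "G \<equiv> transpose_mat A2 * A2"
abbreviation "K \<equiv> Pmat A1 - transpose_mat A2 * A2"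
abbreviation "B \<equiv> cmat (the (mat_inverse (M4cal p n q A1 A2 Ph)) * Acal p n q A1 A2)"
abbreviation "C \<equiv> cmat (the (mat_inverse Ph) * K)"
abbreviation "W \<equiv> mat_kernel (cmat (Ph - P)) \<inter> mat_kernel (cmat A2)"
abbreviation "E1 \<equiv> mat_kernel (char_matrix B 1)"

lemma carriers:
  "P \<in> carrier_mat n n" "G \<in> carrier_mat n n" "K \<in> carrier_mat n n" "Ph \<in> carrier_mat n n"
  "transpose_mat A2 \<in> carrier_mat n q"
  using A1 A2 Ph_spd unfolding Pmat_def spd_def by auto

lemma cmat_carriers:
  "cmat A1 \<in> carrier_mat p n" "cmat A2 \<in> carrier_mat q n" "cmat P \<in> carrier_mat n n"
  "cmat Ph \<in> carrier_mat n n" "cmat (transpose_mat A2) \<in> carrier_mat n q"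
  "cmat (Ph - P) \<in> carrier_mat n n" "cmat G \<in> carrier_mat n n"
  using A1 A2 carriers minus_carrier_mat[OF carriers(1)] by simp_all

lemma Ph_inverse:
  "the (mat_inverse Ph) \<in> carrier_mat n n"
  "Ph * the (mat_inverse Ph) = 1\<^sub>m n" "the (mat_inverse Ph) * Ph = 1\<^sub>m n"
  using mat_inverse_the[OF carriers(4) spd_det_nonzero[OF Ph_spd]] by auto

lemma Acal_carrier: "Acal p n q A1 A2 \<in> carrier_mat N N"
  unfolding Acal_def hcat_def using A1 A2 carriers by (auto simp: add.assoc)

lemma M4_carrier: "M4cal p n q A1 A2 Ph \<in> carrier_mat N N"
  unfolding M4cal_def hcat_def using A1 A2 carriers by (auto simp: add.assoc)

lemma M4_det: "det (M4cal p n q A1 A2 Ph) = det Ph"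
proof -
  have H: "hcat A1 (0\<^sub>m p q) \<in> carrier_mat p (n + q)"
    unfolding hcat_def using A1 by auto
  have lower: "four_block_mat Ph (transpose_mat A2) (0\<^sub>m q n) (1\<^sub>m q) \<in> carrier_mat (n + q) (n + q)"
    using carriers by auto
  have "det (M4cal p n q A1 A2 Ph)
      = det (1\<^sub>m p) * det (four_block_mat Ph (transpose_mat A2) (0\<^sub>m q n) (1\<^sub>m q))"
    unfolding M4cal_def by (rule det_four_block_mat_lower_left_zero[OF _ H refl lower]) auto
  also have "det (four_block_mat Ph (transpose_mat A2) (0\<^sub>m q n) (1\<^sub>m q)) = det Ph * det (1\<^sub>m q)"
    by (rule det_four_block_mat_lower_left_zero[OF carriers(4,5) refl]) auto
  finally show ?thesis
    by simp
qed

lemma M4_inverse: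
  "the (mat_inverse (M4cal p n q A1 A2 Ph)) \<in> carrier_mat N N"
  "M4cal p n q A1 A2 Ph * the (mat_inverse (M4cal p n q A1 A2 Ph)) = 1\<^sub>m N"
  "the (mat_inverse (M4cal p n q A1 A2 Ph)) * M4cal p n q A1 A2 Ph = 1\<^sub>m N"
  using mat_inverse_the[OF M4_carrier] M4_det spd_det_nonzero[OF Ph_spd] by auto

lemma B_carrier: "B \<in> carrier_mat N N"
  using M4_inverse Acal_carrier by simp

lemma C_carrier: "C \<in> carrier_mat n n"
  using Ph_inverse carriers by simp

lemma eigen_B_iff_pencil:
  assumes v: "v \<in> carrier_vec N"
  shows "B *\<^sub>v v = \<mu> \<cdot>\<^sub>v v \<longleftrightarrow>
    cmat (Acal p n q A1 A2) *\<^sub>v v = \<mu> \<cdot>\<^sub>v (cmat (M4cal p n q A1 A2 Ph) *\<^sub>v v)"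
  unfolding cmat_mult[OF M4_inverse(1) Acal_carrier]
  using M4_inverse Acal_carrier M4_carrier v
  by (intro inverse_mult_eigen_iff) (auto simp flip: cmat_mult)

lemma eigen_C_iff_pencil:
  assumes y: "y \<in> carrier_vec n"
  shows "C *\<^sub>v y = \<mu> \<cdot>\<^sub>v y \<longleftrightarrow> cmat K *\<^sub>v y = \<mu> \<cdot>\<^sub>v (cmat Ph *\<^sub>v y)"
  unfolding cmat_mult[OF Ph_inverse(1) carriers(3)]
  using Ph_inverse carriers y
  by (intro inverse_mult_eigen_iff) (auto simp flip: cmat_mult)

lemma eigen_B_blocks_iff:
  assumes x: "x \<in> carrier_vec p" and y: "y \<in> carrier_vec n" and z: "z \<in> carrier_vec q"
  shows "B *\<^sub>v (x @\<^sub>v y @\<^sub>v z) = \<mu> \<cdot>\<^sub>v (x @\<^sub>v y @\<^sub>v z) \<longleftrightarrow>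
      x + cmat A1 *\<^sub>v y = \<mu> \<cdot>\<^sub>v (x + cmat A1 *\<^sub>v y)
    \<and> cmat P *\<^sub>v y + cmat (transpose_mat A2) *\<^sub>v z
        = \<mu> \<cdot>\<^sub>v (cmat Ph *\<^sub>v y + cmat (transpose_mat A2) *\<^sub>v z)
    \<and> cmat A2 *\<^sub>v y + z = \<mu> \<cdot>\<^sub>v z"
proof -
  have v: "x @\<^sub>v y @\<^sub>v z \<in> carrier_vec N"
    using x y z by (simp add: add.assoc)
  note cs = cmat_carriers(1,3,4,5,2)
  have "cmat (Acal p n q A1 A2) *\<^sub>v (x @\<^sub>v y @\<^sub>v z)
      = (x + cmat A1 *\<^sub>v y) @\<^sub>v (cmat P *\<^sub>v y + cmat (transpose_mat A2) *\<^sub>v z)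
        @\<^sub>v (cmat A2 *\<^sub>v y + 1\<^sub>m q *\<^sub>v z)"
    unfolding Acal_def cmat_block3[OF A1 carriers(1,5) A2 one_carrier_mat] cmat_one
    by (rule block3_mult_vec[OF cs(1,2,4,5) one_carrier_mat x y z])
  moreover have "cmat (M4cal p n q A1 A2 Ph) *\<^sub>v (x @\<^sub>v y @\<^sub>v z)
      = (x + cmat A1 *\<^sub>v y) @\<^sub>v (cmat Ph *\<^sub>v y + cmat (transpose_mat A2) *\<^sub>v z)
        @\<^sub>v (0\<^sub>m q n *\<^sub>v y + 1\<^sub>m q *\<^sub>v z)"
    unfolding M4cal_def cmat_block3[OF A1 carriers(4,5) zero_carrier_mat one_carrier_mat]
      cmat_one cmat_zero
    by (rule block3_mult_vec[OF cs(1,3,4) zero_carrier_mat one_carrier_mat x y z])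
  moreover have "0\<^sub>m q n *\<^sub>v y + 1\<^sub>m q *\<^sub>v z = z" "1\<^sub>m q *\<^sub>v z = z"
    using y z by (auto intro!: eq_vecI)
  ultimately show ?thesis
    unfolding eigen_B_iff_pencil[OF v] using x y z cs
    by (simp add: smult_append_vec append_vec_eq[of _ p] append_vec_eq[of _ n])
qed

abbreviation "Wmat \<equiv> cmat (Ph - P) @\<^sub>r cmat A2"

lemma Wmat_carrier: "Wmat \<in> carrier_mat (n + q) n"
  using cmat_carriers(6,2) by (rule carrier_append_rows)

lemma W_iff: "y \<in> W \<longleftrightarrow> y \<in> carrier_vec n \<and> cmat P *\<^sub>v y = cmat Ph *\<^sub>v y \<and> cmat A2 *\<^sub>v y = 0\<^sub>v q"
proof -
  note c = cmat_carriers(6,2)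
  have "y \<in> carrier_vec n \<Longrightarrow> cmat (Ph - P) *\<^sub>v y = cmat Ph *\<^sub>v y - cmat P *\<^sub>v y"
    using cmat_minus[OF carriers(4,1)] carriers by (simp add: minus_mult_distrib_mat_vec)
  moreover have "y \<in> carrier_vec n \<Longrightarrow>
      cmat Ph *\<^sub>v y - cmat P *\<^sub>v y = 0\<^sub>v n \<longleftrightarrow> cmat P *\<^sub>v y = cmat Ph *\<^sub>v y"
    using cmat_carriers(3,4) diff_eq_zero_vec_iff[of "cmat Ph *\<^sub>v y" n "cmat P *\<^sub>v y"] by auto
  ultimately show ?thesis
    using mat_kernel[OF c(1)] mat_kernel[OF c(2)] by auto
qed

lemma W_eq_mat_kernel: "W = mat_kernel Wmat"
proof -
  note c = cmat_carriers(6,2)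
  have zero: "0\<^sub>v (n + q) = 0\<^sub>v n @\<^sub>v (0\<^sub>v q :: complex vec)"
    by (intro eq_vecI) auto
  have "Wmat *\<^sub>v v = 0\<^sub>v (n + q) \<longleftrightarrow> cmat (Ph - P) *\<^sub>v v = 0\<^sub>v n \<and> cmat A2 *\<^sub>v v = 0\<^sub>v q"
    if v: "v \<in> carrier_vec n" for v
    unfolding zero mat_mult_append[OF c v]
    by (rule append_vec_eq[OF mult_mat_vec_carrier[OF c(1) v] zero_carrier_vec])
  then show ?thesis
    using mat_kernel[OF c(1)] mat_kernel[OF c(2)] mat_kernel[OF Wmat_carrier] by auto
qed

lemma fixed_B_blocks_iff:
  assumes x: "x \<in> carrier_vec p" and y: "y \<in> carrier_vec n" and z: "z \<in> carrier_vec q"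
  shows "B *\<^sub>v (x @\<^sub>v y @\<^sub>v z) = 1 \<cdot>\<^sub>v (x @\<^sub>v y @\<^sub>v z) \<longleftrightarrow> y \<in> W"
proof -
  have "cmat P *\<^sub>v y \<in> carrier_vec n" "cmat Ph *\<^sub>v y \<in> carrier_vec n"
    "cmat (transpose_mat A2) *\<^sub>v z \<in> carrier_vec n" "cmat A2 *\<^sub>v y \<in> carrier_vec q"
    using cmat_carriers y z by simp_all
  then show ?thesis
    unfolding eigen_B_blocks_iff[OF x y z] W_iff
    using y z by (simp add: add_right_cancel_vec add_left_eq_self_vec)
qed

lemma E1_eq: "E1 = {x @\<^sub>v y @\<^sub>v z | x y z. x \<in> carrier_vec p \<and> y \<in> W \<and> z \<in> carrier_vec q}"
proof (intro equalityI subsetI)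
  fix v assume "v \<in> E1"
  then have v: "v \<in> carrier_vec N" "B *\<^sub>v v = 1 \<cdot>\<^sub>v v"
    using mat_kernel_char_matrix_iff[OF B_carrier] by auto
  obtain x y z where xyz: "x \<in> carrier_vec p" "y \<in> carrier_vec n" "z \<in> carrier_vec q"
    "v = x @\<^sub>v y @\<^sub>v z"
    using v(1) by (rule append_vec3_cases)
  then show "v \<in> {x @\<^sub>v y @\<^sub>v z | x y z. x \<in> carrier_vec p \<and> y \<in> W \<and> z \<in> carrier_vec q}"
    using fixed_B_blocks_iff[OF xyz(1-3)] v(2) by auto
next
  fix v assume "v \<in> {x @\<^sub>v y @\<^sub>v z | x y z. x \<in> carrier_vec p \<and> y \<in> W \<and> z \<in> carrier_vec q}"
  then obtain x y z where xyz: "x \<in> carrier_vec p" "y \<in> W" "z \<in> carrier_vec q"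
    "v = x @\<^sub>v y @\<^sub>v z"
    by blast
  then have "y \<in> carrier_vec n"
    using W_iff by auto
  then show "v \<in> E1"
    using xyz fixed_B_blocks_iff[OF xyz(1) _ xyz(3)] mat_kernel_char_matrix_iff[OF B_carrier]
    by (auto simp: add.assoc)
qed

lemma p_pos: "0 < p"
proof (rule ccontr)
  assume "\<not> 0 < p"
  then have "A1 *\<^sub>v unit_vec n 0 = 0\<^sub>v p"
    using A1 by (intro eq_vecI) auto
  moreover have "unit_vec n 0 \<noteq> (0\<^sub>v n :: real vec)"
    using n_pos by (auto simp: vec_eq_iff)
  ultimately show False
    using spd_gram_diff_mult_vec_nonzero[OF K_spd[unfolded Pmat_def] A1 A2] by auto
qed

lemma eigenvalue_one: "eigenvalue B 1"
proof -
  define v where "v = unit_vec p 0 @\<^sub>v 0\<^sub>v n @\<^sub>v (0\<^sub>v q :: complex vec)"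
  have "0\<^sub>v n \<in> W"
    using W_iff carriers A2 by (auto simp: mult_mat_vec_zero)
  then have "v \<in> E1"
    unfolding E1_eq v_def
    by (intro CollectI exI[of _ "unit_vec p 0"] exI[of _ "0\<^sub>v n"] exI[of _ "0\<^sub>v q"]) auto
  moreover have "v \<noteq> 0\<^sub>v N"
    using p_pos unfolding v_def by (auto simp: vec_eq_iff)
  ultimately show ?thesis
    using mat_kernel_char_matrix_iff[OF B_carrier] B_carrier
    unfolding eigenvalue_def eigenvector_def by auto
qed

abbreviation lift :: "complex \<Rightarrow> complex vec \<Rightarrow> complex vec" where
  "lift \<mu> y \<equiv> (- (cmat A1 *\<^sub>v y)) @\<^sub>v y @\<^sub>v ((1 / (\<mu> - 1)) \<cdot>\<^sub>v (cmat A2 *\<^sub>v y))"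

lemma eigen_B_blocks_ne_one_iff:
  assumes x: "x \<in> carrier_vec p" and y: "y \<in> carrier_vec n" and z: "z \<in> carrier_vec q"
    and \<mu>: "\<mu> \<noteq> 1"
  shows "B *\<^sub>v (x @\<^sub>v y @\<^sub>v z) = \<mu> \<cdot>\<^sub>v (x @\<^sub>v y @\<^sub>v z) \<longleftrightarrow>
    C *\<^sub>v y = \<mu> \<cdot>\<^sub>v y \<and> x @\<^sub>v y @\<^sub>v z = lift \<mu> y"
proof -
  let ?c = "1 / (\<mu> - 1)"
  have c: "cmat A1 *\<^sub>v y \<in> carrier_vec p" "cmat A2 *\<^sub>v y \<in> carrier_vec q"
    "cmat P *\<^sub>v y \<in> carrier_vec n" "cmat Ph *\<^sub>v y \<in> carrier_vec n" "cmat G *\<^sub>v y \<in> carrier_vec n"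
    by (rule mult_mat_vec_carrier[OF cmat_carriers(1) y] mult_mat_vec_carrier[OF cmat_carriers(2) y]
        mult_mat_vec_carrier[OF cmat_carriers(3) y] mult_mat_vec_carrier[OF cmat_carriers(4) y]
        mult_mat_vec_carrier[OF cmat_carriers(7) y])+
  have G_y: "cmat G *\<^sub>v y = cmat (transpose_mat A2) *\<^sub>v (cmat A2 *\<^sub>v y)"
    using cmat_mult[OF carriers(5) A2] cmat_carriers(5,2) y by (simp add: assoc_mult_mat_vec)
  have K_y: "cmat K *\<^sub>v y = cmat P *\<^sub>v y - cmat G *\<^sub>v y"
    using cmat_minus[OF carriers(1,2)] cmat_carriers(3) carriers(2) y
    by (simp add: minus_mult_distrib_mat_vec)
  have lift_iff: "x @\<^sub>v y @\<^sub>v z = lift \<mu> y \<longleftrightarrow> x = - (cmat A1 *\<^sub>v y) \<and> z = ?c \<cdot>\<^sub>v (cmat A2 *\<^sub>v y)"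
    using x y c(1) by simp
  have middle: "cmat P *\<^sub>v y + cmat (transpose_mat A2) *\<^sub>v z
        = \<mu> \<cdot>\<^sub>v (cmat Ph *\<^sub>v y + cmat (transpose_mat A2) *\<^sub>v z)
      \<longleftrightarrow> cmat K *\<^sub>v y = \<mu> \<cdot>\<^sub>v (cmat Ph *\<^sub>v y)"
    if "z = ?c \<cdot>\<^sub>v (cmat A2 *\<^sub>v y)"
  proof -
    have "cmat (transpose_mat A2) *\<^sub>v z = ?c \<cdot>\<^sub>v (cmat G *\<^sub>v y)"
      unfolding that G_y using cmat_carriers(5) c(2) by (simp add: mult_mat_vec)
    then show ?thesis
      unfolding K_y using shifted_smult_eq_iff[OF c(3,4,5) \<mu>] by simp
  qed
  show ?thesis
    unfolding eigen_B_blocks_iff[OF x y z] add_eq_smult_add_iff[OF x c(1) \<mu>]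
      add_eq_smult_iff[OF c(2) z \<mu>] eigen_C_iff_pencil[OF y] lift_iff
    using middle by blast
qed

lemma lift_carrier: "y \<in> carrier_vec n \<Longrightarrow> lift \<mu> y \<in> carrier_vec N"
  using cmat_carriers(1,2) append_carrier_vec[of _ p _ "n + q"] by (simp add: add.assoc)

lemma lift_eq_zero_iff: "y \<in> carrier_vec n \<Longrightarrow> lift \<mu> y = 0\<^sub>v N \<longleftrightarrow> y = 0\<^sub>v n"
proof -
  assume y: "y \<in> carrier_vec n"
  have "0\<^sub>v N = 0\<^sub>v p @\<^sub>v 0\<^sub>v n @\<^sub>v (0\<^sub>v q :: complex vec)"
    by (intro eq_vecI) auto
  moreover have "cmat A1 *\<^sub>v 0\<^sub>v n = 0\<^sub>v p" "cmat A2 *\<^sub>v 0\<^sub>v n = 0\<^sub>v q"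
    using mult_mat_vec_zero cmat_carriers(1,2) by blast+
  moreover have "- (cmat A1 *\<^sub>v y) \<in> carrier_vec p"
    using y cmat_carriers(1) by simp
  ultimately show ?thesis
    using y append_vec_eq[OF \<open>- (cmat A1 *\<^sub>v y) \<in> carrier_vec p\<close> zero_carrier_vec]
      append_vec_eq[OF y zero_carrier_vec] by auto
qed

lemma eigenvector_B_iff:
  assumes \<mu>: "\<mu> \<noteq> 1"
  shows "eigenvector B v \<mu> \<longleftrightarrow> (\<exists>y. eigenvector C y \<mu> \<and> v = lift \<mu> y)"
proof
  assume "eigenvector B v \<mu>"
  then have v: "v \<in> carrier_vec N" "v \<noteq> 0\<^sub>v N" "B *\<^sub>v v = \<mu> \<cdot>\<^sub>v v"
    using B_carrier unfolding eigenvector_def by auto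
  obtain x y z where xyz: "x \<in> carrier_vec p" "y \<in> carrier_vec n" "z \<in> carrier_vec q"
    "v = x @\<^sub>v y @\<^sub>v z"
    using v(1) by (rule append_vec3_cases)
  then have "C *\<^sub>v y = \<mu> \<cdot>\<^sub>v y" "v = lift \<mu> y"
    using eigen_B_blocks_ne_one_iff[OF xyz(1-3) \<mu>] v(3) by auto
  moreover have "y \<noteq> 0\<^sub>v n"
    using lift_eq_zero_iff[OF xyz(2)] v(2) calculation(2) by auto
  ultimately show "\<exists>y. eigenvector C y \<mu> \<and> v = lift \<mu> y"
    using xyz(2) C_carrier unfolding eigenvector_def by auto
next
  assume "\<exists>y. eigenvector C y \<mu> \<and> v = lift \<mu> y"
  then obtain y where "eigenvector C y \<mu>" and v: "v = lift \<mu> y"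
    by auto
  then have y: "y \<in> carrier_vec n" "y \<noteq> 0\<^sub>v n" "C *\<^sub>v y = \<mu> \<cdot>\<^sub>v y"
    using C_carrier unfolding eigenvector_def by auto
  have "B *\<^sub>v v = \<mu> \<cdot>\<^sub>v v"
    unfolding v using eigen_B_blocks_ne_one_iff[OF _ y(1) _ \<mu>] y(3) cmat_carriers(1,2) y(1)
    by simp
  then show "eigenvector B v \<mu>"
    unfolding eigenvector_def v
    using B_carrier lift_carrier[OF y(1)] lift_eq_zero_iff[OF y(1)] y(2) by auto
qed

definition lift_mat :: "complex \<Rightarrow> complex mat" where
  "lift_mat \<mu> = (- cmat A1) @\<^sub>r (1\<^sub>m n @\<^sub>r ((1 / (\<mu> - 1)) \<cdot>\<^sub>m cmat A2))"

lemma lift_mat_carrier: "lift_mat \<mu> \<in> carrier_mat N n"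
  unfolding lift_mat_def using cmat_carriers(1,2) by (simp add: add.assoc carrier_append_rows)

lemma lift_mat_mult_vec:
  assumes y: "y \<in> carrier_vec n"
  shows "lift_mat \<mu> *\<^sub>v y = lift \<mu> y"
proof -
  have c: "- cmat A1 \<in> carrier_mat p n" "(1 / (\<mu> - 1)) \<cdot>\<^sub>m cmat A2 \<in> carrier_mat q n"
    using cmat_carriers(1,2) by auto
  have "((1 / (\<mu> - 1)) \<cdot>\<^sub>m cmat A2) *\<^sub>v y = (1 / (\<mu> - 1)) \<cdot>\<^sub>v (cmat A2 *\<^sub>v y)"
    using cmat_carriers(2) y
    by (intro eq_vecI) (auto simp: scalar_prod_def sum_distrib_left mult.assoc)
  moreover have "(- cmat A1) *\<^sub>v y = - (cmat A1 *\<^sub>v y)"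
    using cmat_carriers(1) y by (intro eq_vecI) (auto simp: scalar_prod_def sum_negf)
  moreover have "lift_mat \<mu> *\<^sub>v y
      = ((- cmat A1) *\<^sub>v y) @\<^sub>v (1\<^sub>m n *\<^sub>v y) @\<^sub>v (((1 / (\<mu> - 1)) \<cdot>\<^sub>m cmat A2) *\<^sub>v y)"
    unfolding lift_mat_def mat_mult_append[OF c(1) carrier_append_rows[OF one_carrier_mat c(2)] y]
      mat_mult_append[OF one_carrier_mat c(2) y] ..
  ultimately show ?thesis
    using y by simp
qed

lemma inj_on_lift_mat: "inj_on ((*\<^sub>v) (lift_mat \<mu>)) (carrier_vec n)"
proof (rule inj_onI)
  fix y1 y2 assume y: "y1 \<in> carrier_vec n" "y2 \<in> carrier_vec n"
    and eq: "lift_mat \<mu> *\<^sub>v y1 = lift_mat \<mu> *\<^sub>v y2"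
  have "- (cmat A1 *\<^sub>v y1) \<in> carrier_vec p" "- (cmat A1 *\<^sub>v y2) \<in> carrier_vec p"
    using y cmat_carriers(1) by auto
  then show "y1 = y2"
    using eq y unfolding lift_mat_mult_vec[OF y(1)] lift_mat_mult_vec[OF y(2)]
    by (simp add: append_vec_eq)
qed

lemma lift_mat_image_eigenspace:
  assumes \<mu>: "\<mu> \<noteq> 1"
  shows "(*\<^sub>v) (lift_mat \<mu>) ` mat_kernel (char_matrix C \<mu>) = mat_kernel (char_matrix B \<mu>)"
proof -
  have kernel_C: "mat_kernel (char_matrix C \<mu>) = {y \<in> carrier_vec n. C *\<^sub>v y = \<mu> \<cdot>\<^sub>v y}"
    using mat_kernel_char_matrix_iff[OF C_carrier] by blast
  have kernel_B: "mat_kernel (char_matrix B \<mu>) = {v \<in> carrier_vec N. B *\<^sub>v v = \<mu> \<cdot>\<^sub>v v}"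
    using mat_kernel_char_matrix_iff[OF B_carrier] by blast
  show ?thesis
  proof (intro equalityI subsetI)
    fix v assume "v \<in> (*\<^sub>v) (lift_mat \<mu>) ` mat_kernel (char_matrix C \<mu>)"
    then obtain y where y: "y \<in> carrier_vec n" "C *\<^sub>v y = \<mu> \<cdot>\<^sub>v y" "v = lift \<mu> y"
      unfolding kernel_C using lift_mat_mult_vec by auto
    then show "v \<in> mat_kernel (char_matrix B \<mu>)"
      unfolding kernel_B
      using lift_carrier eigen_B_blocks_ne_one_iff[OF _ y(1) _ \<mu>] cmat_carriers(1,2) by simp
  next
    fix v assume "v \<in> mat_kernel (char_matrix B \<mu>)"
    then have v: "v \<in> carrier_vec N" "B *\<^sub>v v = \<mu> \<cdot>\<^sub>v v"
      unfolding kernel_B by auto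
    obtain x y z where xyz: "x \<in> carrier_vec p" "y \<in> carrier_vec n" "z \<in> carrier_vec q"
      "v = x @\<^sub>v y @\<^sub>v z"
      using v(1) by (rule append_vec3_cases)
    then have "y \<in> mat_kernel (char_matrix C \<mu>)" "v = lift_mat \<mu> *\<^sub>v y"
      using eigen_B_blocks_ne_one_iff[OF xyz(1-3) \<mu>] v(2) lift_mat_mult_vec[OF xyz(2)]
      unfolding kernel_C by auto
    then show "v \<in> (*\<^sub>v) (lift_mat \<mu>) ` mat_kernel (char_matrix C \<mu>)"
      by blast
  qed
qed

lemma kernel_dim_B_eq_C:
  assumes \<mu>: "\<mu> \<noteq> 1"
  shows "kernel_dim (char_matrix B \<mu>) = kernel_dim (char_matrix C \<mu>)"
proof -
  have "mat_kernel (char_matrix C \<mu>) \<subseteq> carrier_vec n"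
    by (rule mat_kernel_carrier[OF char_matrix_closed[OF C_carrier]])
  then have "kernel_dim (char_matrix C \<mu>) = kernel_dim (char_matrix B \<mu>)"
    by (intro kernel_dim_eq_of_bij_mult_mat_vec[OF char_matrix_closed[OF C_carrier]
          char_matrix_closed[OF B_carrier] lift_mat_carrier _ lift_mat_image_eigenspace[OF \<mu>]]
        inj_on_subset[OF inj_on_lift_mat])
  then show ?thesis
    by simp
qed

lemma eigenvalues_finite: "finite {\<mu>. eigenvalue B \<mu>}"
proof -
  have "char_poly B \<noteq> 0"
    using degree_monic_char_poly[OF B_carrier] by auto
  then have "finite {\<mu>. poly (char_poly B) \<mu> = 0}"
    by (rule poly_roots_finite)
  moreover have "{\<mu>. eigenvalue B \<mu>} \<subseteq> {\<mu>. poly (char_poly B) \<mu> = 0}"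
    using eigenvalue_root_char_poly[OF B_carrier] by auto
  ultimately show ?thesis
    by (rule finite_subset[rotated])
qed

lemma eigenvalue_bounds:
  assumes "eigenvalue B \<mu>"
  shows "\<mu> \<in> \<real> \<and> 0 < Re \<mu> \<and> Re \<mu> < 2"
proof (cases "\<mu> = 1")
  case False
  obtain v where "eigenvector B v \<mu>"
    using assms unfolding eigenvalue_def by auto
  then obtain y where "eigenvector C y \<mu>"
    using eigenvector_B_iff[OF False] by auto
  then have y: "y \<in> carrier_vec n" "y \<noteq> 0\<^sub>v n" "C *\<^sub>v y = \<mu> \<cdot>\<^sub>v y"
    using C_carrier unfolding eigenvector_def by auto
  have "2 \<cdot>\<^sub>m Ph - K = 2 \<cdot>\<^sub>m Ph - P + G"
    using carriers by (intro eq_matI) auto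
  then have "spd (2 \<cdot>\<^sub>m Ph - K) n"
    using cond by simp
  then show ?thesis
    using spd_pencil_eigenvalue_bounds[OF K_spd Ph_spd _ y(1,2)] eigen_C_iff_pencil[OF y(1)] y(3)
    by blast
qed simp

lemma W_basis:
  assumes "cbasis n W Y"
  shows "Y \<subseteq> W" "\<not> lin_dep n Y" "span n Y = W" "finite Y" "card Y = cdim n W"
proof -
  interpret KW: kernel "n + q" n Wmat
    by unfold_locales (rule Wmat_carrier)
  have b: "KW.basis Y"
    using assms unfolding cbasis_def W_eq_mat_kernel .
  then show "Y \<subseteq> W" "\<not> lin_dep n Y" "span n Y = W"
    unfolding KW.basis_iff_lin_indpt_span W_eq_mat_kernel by auto
  then show fin: "finite Y"
    using KW.Ker.fin_dim_li_fin[OF KW.fin_dim] b unfolding KW.Ker.basis_def by auto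
  show "card Y = cdim n W"
    using KW.Ker.dim_basis[OF fin b] unfolding cdim_def W_eq_mat_kernel by simp
qed

lemma W_append_basis:
  assumes Y: "cbasis n W Y" and Z: "cbasis q (carrier_vec q) Z"
  defines "I \<equiv> padr q ` Y \<union> padl n ` Z"
  shows "I \<subseteq> carrier_vec (n + q)" "finite I" "\<not> lin_dep (n + q) I"
    "span (n + q) I = {y @\<^sub>v z | y z. y \<in> W \<and> z \<in> carrier_vec q}" "card I = cdim n W + q"
proof -
  interpret Vn: vec_space "TYPE(complex)" n .
  note Z = cbasis_carrier_vec[OF Z] and Y = W_basis[OF Y]
  have Y_carrier: "Y \<subseteq> carrier_vec n"
    using Y(1) W_iff by auto
  show "I \<subseteq> carrier_vec (n + q)"
    unfolding I_def using padr_image[OF Y_carrier] padl_image[OF Z(1)] by auto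
  show "finite I"
    unfolding I_def using Y(4) Z(4) by simp
  show "\<not> lin_dep (n + q) I"
    unfolding I_def using Y_carrier Y(2) Z(1,2) by (rule padr_padl_lindep)
  show "span (n + q) I = {y @\<^sub>v z | y z. y \<in> W \<and> z \<in> carrier_vec q}"
    unfolding I_def span_padr_Un_padl[OF Y_carrier Z(1)] Y(3) Z(3) ..
  show "card I = cdim n W + q"
    unfolding I_def using Vn.zero_notin_lin_indpt[OF Y(2) Y_carrier] Y_carrier Y(4,5) Z(1,4,5)
    by (simp add: card_padr_Un_padl)
qed

lemma E1_basis:
  assumes X: "cbasis p (carrier_vec p) X" and Z: "cbasis q (carrier_vec q) Z" and Y: "cbasis n W Y"
  defines "U \<equiv> (\<lambda>x. x @\<^sub>v 0\<^sub>v n @\<^sub>v 0\<^sub>v q) ` X \<union> (\<lambda>z. 0\<^sub>v p @\<^sub>v 0\<^sub>v n @\<^sub>v z) ` Z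
      \<union> (\<lambda>y. 0\<^sub>v p @\<^sub>v y @\<^sub>v 0\<^sub>v q) ` Y"
  shows "cbasis N E1 U" and "finite U" and "card U = p + q + cdim n W"
proof -
  interpret Vp: vec_space "TYPE(complex)" p .
  interpret KE: kernel N N "char_matrix B 1"
    by unfold_locales (rule char_matrix_closed[OF B_carrier])
  define I where "I = padr q ` Y \<union> padl n ` Z"
  note X = cbasis_carrier_vec[OF X] and I = W_append_basis[OF Y Z, folded I_def]
  have U: "U = padr (n + q) ` X \<union> padl p ` I"
  proof -
    have "0\<^sub>v n @\<^sub>v 0\<^sub>v q = (0\<^sub>v (n + q) :: complex vec)"
      by (intro eq_vecI) auto
    then show ?thesis
      unfolding U_def I_def by (auto simp: image_image)
  qed
  have NN: "p + (n + q) = N"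
    by simp
  have U_indep: "\<not> lin_dep N U"
    unfolding U NN[symmetric] using X(1,2) I(1,3) by (rule padr_padl_lindep)
  have U_span: "span N U = E1"
    unfolding U NN[symmetric] span_padr_Un_padl[OF X(1) I(1)] X(3) I(4) E1_eq by blast
  have "U \<subseteq> carrier_vec N"
    unfolding U NN[symmetric] using padr_image[OF X(1)] padl_image[OF I(1)] by blast
  then have "U \<subseteq> E1"
    unfolding U_span[symmetric] by (intro KE.NC.in_own_span) (simp add: module_vec_simps)
  then show "cbasis N E1 U"
    unfolding cbasis_def KE.basis_iff_lin_indpt_span using U_indep U_span by simp
  show "finite U"
    unfolding U using X(4) I(2) by simp
  show "card U = p + q + cdim n W"
    unfolding U using Vp.zero_notin_lin_indpt[OF X(2,1)] X(1,4,5) I(1,2,5)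
    by (simp add: card_padr_Un_padl)
qed

lemma kernel_dim_E1: "kernel_dim (char_matrix B 1) = p + q + cdim n W"
proof -
  interpret Vp: vec_space "TYPE(complex)" p .
  interpret Vq: vec_space "TYPE(complex)" q .
  interpret KW: kernel "n + q" n Wmat
    by unfold_locales (rule Wmat_carrier)
  interpret KE: kernel N N "char_matrix B 1"
    by unfold_locales (rule char_matrix_closed[OF B_carrier])
  have mv: "module_vec TYPE(complex) k\<lparr>carrier := carrier_vec k\<rparr> = module_vec TYPE(complex) k" for k
    by (simp add: module_vec_def)
  have X: "cbasis p (carrier_vec p) (set (unit_vecs p))"
    unfolding cbasis_def mv by (rule Vp.unit_vecs_basis)
  have Z: "cbasis q (carrier_vec q) (set (unit_vecs q))"
    unfolding cbasis_def mv by (rule Vq.unit_vecs_basis)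
  obtain Y where "KW.basis Y"
    using kernel_basis_exists[OF Wmat_carrier] by auto
  then have Y: "cbasis n W Y"
    unfolding cbasis_def W_eq_mat_kernel .
  note U = E1_basis[OF X Z Y]
  then show ?thesis
    using KE.Ker.dim_basis[OF U(2)] unfolding cbasis_def by simp
qed

lemma sum_kernel_dims_le: "(\<Sum>\<mu> | eigenvalue B \<mu> \<and> \<mu> \<noteq> 1. kernel_dim (char_matrix B \<mu>)) \<le> n"
proof -
  interpret Vn: vec_space "TYPE(complex)" n .
  let ?L = "{\<mu>. eigenvalue B \<mu> \<and> \<mu> \<noteq> 1}"
  have fin: "finite ?L"
    using eigenvalues_finite by (rule finite_subset[rotated]) auto
  have "\<exists>b. finite b \<and> b \<subseteq> mat_kernel (char_matrix C \<mu>) \<and> \<not> Vn.lin_dep b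
      \<and> card b = kernel_dim (char_matrix C \<mu>)" for \<mu>
    by (rule Vn.lin_indpt_kernel_card_eq_kernel_dim[OF char_matrix_closed[OF C_carrier]]) blast
  then obtain S where S: "\<And>\<mu>. finite (S \<mu>) \<and> S \<mu> \<subseteq> mat_kernel (char_matrix C \<mu>)
      \<and> \<not> Vn.lin_dep (S \<mu>) \<and> card (S \<mu>) = kernel_dim (char_matrix C \<mu>)"
    by metis
  have S': "S \<mu> \<subseteq> mat_kernel (char_matrix C \<mu>) \<and> finite (S \<mu>) \<and> \<not> Vn.lin_dep (S \<mu>)" for \<mu>
    using S by blast
  have "card (\<Union>\<mu>\<in>?L. S \<mu>) = (\<Sum>\<mu>\<in>?L. card (S \<mu>))"
    using Vn.card_UN_eigenspaces[OF C_carrier fin S'] .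
  also have "\<dots> = (\<Sum>\<mu>\<in>?L. kernel_dim (char_matrix B \<mu>))"
    using S kernel_dim_B_eq_C by (intro sum.cong) auto
  finally have "card (\<Union>\<mu>\<in>?L. S \<mu>) = (\<Sum>\<mu>\<in>?L. kernel_dim (char_matrix B \<mu>))" .
  moreover have "(\<Union>\<mu>\<in>?L. S \<mu>) \<subseteq> carrier_vec n"
    using S mat_kernel_carrier[OF char_matrix_closed[OF C_carrier]] by blast
  ultimately show ?thesis
    using Vn.li_le_dim[OF Vn.fin_dim _ Vn.lin_indpt_UN_eigenspaces[OF C_carrier fin S']]
      Vn.dim_is_n by (simp add: module_vec_simps)
qed

lemma lin_indpt_eigenvectors:
  "\<exists>S. finite S
    \<and> card S = p + q + cdim n W + (\<Sum>\<mu> | eigenvalue B \<mu> \<and> \<mu> \<noteq> 1. kernel_dim (char_matrix B \<mu>))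
    \<and> clin_indpt N S \<and> (\<forall>v \<in> S. \<exists>\<mu>. eigenvector B v \<mu>)"
proof -
  interpret VN: vec_space "TYPE(complex)" N .
  let ?L = "{\<mu>. eigenvalue B \<mu>}"
  have "\<exists>b. finite b \<and> b \<subseteq> mat_kernel (char_matrix B \<mu>) \<and> \<not> VN.lin_dep b
      \<and> card b = kernel_dim (char_matrix B \<mu>)" for \<mu>
    by (rule VN.lin_indpt_kernel_card_eq_kernel_dim[OF char_matrix_closed[OF B_carrier]]) blast
  then obtain S where S: "\<And>\<mu>. finite (S \<mu>) \<and> S \<mu> \<subseteq> mat_kernel (char_matrix B \<mu>)
      \<and> \<not> VN.lin_dep (S \<mu>) \<and> card (S \<mu>) = kernel_dim (char_matrix B \<mu>)"
    by metis
  have S': "S \<mu> \<subseteq> mat_kernel (char_matrix B \<mu>) \<and> finite (S \<mu>) \<and> \<not> VN.lin_dep (S \<mu>)" for \<mu>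
    using S by blast
  have "card (\<Union>\<mu>\<in>?L. S \<mu>) = (\<Sum>\<mu>\<in>?L. kernel_dim (char_matrix B \<mu>))"
    using VN.card_UN_eigenspaces[OF B_carrier eigenvalues_finite S'] S by simp
  also have "\<dots> = kernel_dim (char_matrix B 1) + (\<Sum>\<mu>\<in>?L - {1}. kernel_dim (char_matrix B \<mu>))"
    using eigenvalue_one eigenvalues_finite by (subst sum.remove[of _ 1]) auto
  also have "?L - {1} = {\<mu>. eigenvalue B \<mu> \<and> \<mu> \<noteq> 1}"
    by auto
  finally have card: "card (\<Union>\<mu>\<in>?L. S \<mu>) = p + q + cdim n W
      + (\<Sum>\<mu> | eigenvalue B \<mu> \<and> \<mu> \<noteq> 1. kernel_dim (char_matrix B \<mu>))"
    unfolding kernel_dim_E1 .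
  have "v \<noteq> 0\<^sub>v N" "v \<in> carrier_vec N" "B *\<^sub>v v = \<mu> \<cdot>\<^sub>v v" if "v \<in> S \<mu>" for v \<mu>
    using that S[of \<mu>] VN.zero_notin_lin_indpt mat_kernel_char_matrix_iff[OF B_carrier]
      mat_kernel_carrier[OF char_matrix_closed[OF B_carrier]] by blast+
  then have "\<forall>v \<in> (\<Union>\<mu>\<in>?L. S \<mu>). \<exists>\<mu>. eigenvector B v \<mu>"
    unfolding eigenvector_def using carrier_matD(1)[OF B_carrier] by auto
  moreover have "finite (\<Union>\<mu>\<in>?L. S \<mu>)"
    using eigenvalues_finite S by blast
  moreover have "clin_indpt N (\<Union>\<mu>\<in>?L. S \<mu>)"
    unfolding clin_indpt_def using VN.lin_indpt_UN_eigenspaces[OF B_carrier eigenvalues_finite S'] .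
  ultimately show ?thesis
    using card by blast
qed

end

theorem theorem5:
  fixes p n q :: nat and A1 A2 Ph :: "real mat"
  assumes n_pos: "0 < n"
    and A1: "A1 \<in> carrier_mat p n" and A2: "A2 \<in> carrier_mat q n"
    and A1_rank: "vec_space.rank p A1 = n"
    and P_spd: "spd (Pmat A1 - transpose_mat A2 * A2) n"
    and Ph_spd: "spd Ph n"
    and cond: "spd (2 \<cdot>\<^sub>m Ph - Pmat A1 + transpose_mat A2 * A2) n"
  shows
   "let B = cmat (the (mat_inverse (M4cal p n q A1 A2 Ph)) * Acal p n q A1 A2);
        C = cmat (the (mat_inverse Ph) * (Pmat A1 - transpose_mat A2 * A2));
        W = mat_kernel (cmat (Ph - Pmat A1)) \<inter> mat_kernel (cmat A2);
        d = cdim n W;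
        E1 = mat_kernel (char_matrix B 1);
        h = (\<Sum>\<mu> | eigenvalue B \<mu> \<and> \<mu> \<noteq> 1. kernel_dim (char_matrix B \<mu>))
    in
    \<comment> \<open>(i)\<close>
    (eigenvalue B 1 \<and> kernel_dim (char_matrix B 1) = p + q + d \<and>
     (\<forall>X Y Z. cbasis p (carrier_vec p) X \<and> cbasis q (carrier_vec q) Z \<and> cbasis n W Y \<longrightarrow>
        cbasis (p + n + q) E1
          ((\<lambda>x. x @\<^sub>v 0\<^sub>v n @\<^sub>v 0\<^sub>v q) ` X \<union> (\<lambda>z. 0\<^sub>v p @\<^sub>v 0\<^sub>v n @\<^sub>v z) ` Z
           \<union> (\<lambda>y. 0\<^sub>v p @\<^sub>v y @\<^sub>v 0\<^sub>v q) ` Y))) \<and>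
    \<comment> \<open>(ii)\<close>
    (\<forall>\<mu> v. \<mu> \<noteq> 1 \<longrightarrow>
        (eigenvector B v \<mu> \<longleftrightarrow>
          (\<exists>y. eigenvector C y \<mu> \<and>
               v = (- (cmat A1 *\<^sub>v y)) @\<^sub>v y @\<^sub>v ((1 / (\<mu> - 1)) \<cdot>\<^sub>v (cmat A2 *\<^sub>v y))))) \<and>
    (\<forall>\<mu>. eigenvalue B \<mu> \<and> \<mu> \<noteq> 1 \<longrightarrow>
        kernel_dim (char_matrix B \<mu>) = kernel_dim (char_matrix C \<mu>) \<and>
        kernel_dim (char_matrix B \<mu>) \<le> h) \<and>
    h \<le> n \<and>
    (\<exists>S. finite S \<and> card S = p + q + d + h \<and> clin_indpt (p + n + q) S \<and>
         (\<forall>v \<in> S. \<exists>\<mu>. eigenvector B v \<mu>)) \<and>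
    \<comment> \<open>(iii)\<close>
    (\<forall>\<mu>. eigenvalue B \<mu> \<longrightarrow> \<mu> \<in> \<real> \<and> 0 < Re \<mu> \<and> Re \<mu> < 2)"
proof -
  interpret preconditioned_saddle_point p n q A1 A2 Ph
    by unfold_locales (rule n_pos A1 A2 P_spd Ph_spd cond)+
  have le_sum: "kernel_dim (char_matrix B \<mu>)
      \<le> (\<Sum>\<mu> | eigenvalue B \<mu> \<and> \<mu> \<noteq> 1. kernel_dim (char_matrix B \<mu>))"
    if "eigenvalue B \<mu> \<and> \<mu> \<noteq> 1" for \<mu>
    using that eigenvalues_finite by (intro member_le_sum) (auto elim: finite_subset[rotated])
  show ?thesis
    unfolding Let_def
    using eigenvalue_one kernel_dim_E1 E1_basis(1) eigenvector_B_iff kernel_dim_B_eq_C le_sum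
      sum_kernel_dims_le lin_indpt_eigenvectors eigenvalue_bounds
    by blast
qed

end
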